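(* Let $k\ge 2$ be a non-square integer, let $0=t_0<t_1<\cdots$ be the increasing enumeration of all nonnegative integers $t$ with $kT_t$ triangular, let $\xi_n\ge 0$ satisfy $T_{\xi_n}=kT_{t_n}$, and let $r$ and $\kappa=t_{r-1}+t_r$ be as in Theorem 1. Then for every integer $n\ge r$, $$\left(\xi_n-\xi_{n-r}\right)^2-\kappa\left(\xi_n+2\xi_n\xi_{n-r}+\xi_{n-r}\right)=\xi_r\left(\xi_{r-1}+1\right).$$
   Context: $T_m=\frac{m(m+1)}{2}$ denotes the $m$-th triangular number; an integer is triangular if it equals $T_m$ for some integer $m\ge0$. Theorem 1 (referenced): for non-square $k\ge2$ there is a positive integer $r$ (the rank) such that with $\kappa=t_{r-1}+t_r$ one has $\kappa=\xi_r-\xi_{r-1}-1$, $(t_{2r}-t_{r-1})/t_r=2\kappa+3$, and $t_n=2(\kappa+1)t_{n-r}-t_{n-2r}+\kappa$, $\xi_n=2(\kappa+1)\xi_{n-r}-\xi_{n-2r}+\kappa$ for all $n\ge 2r$. *)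

theory Defs
  imports Main "HOL-Library.Infinite_Set"
begin

definition tri :: "nat \<Rightarrow> nat" where
  "tri m = m * (m + 1) div 2"

definition is_triangular :: "nat \<Rightarrow> bool" where
  "is_triangular a \<longleftrightarrow> (\<exists>m. a = tri m)"

definition tseq :: "nat \<Rightarrow> nat \<Rightarrow> nat" where
  "tseq k n = enumerate {t. is_triangular (k * tri t)} n"

definition xiseq :: "nat \<Rightarrow> nat \<Rightarrow> nat" where
  "xiseq k n = (THE x. tri x = k * tri (tseq k n))"

end

theory Submission
  imports Defs
begin

text \<open>With \<open>u = 2\<xi> + 1\<close> and \<open>v = 2t + 1\<close>, the relation \<open>T\<^sub>\<xi> = k T\<^sub>t\<close> becomes the
  Pell-type equation \<open>u\<^sup>2 - k v\<^sup>2 = 1 - k\<close>, and the recurrences of Theorem 1 become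
  \<open>w\<^sub>n\<^sub>+\<^sub>r = 2c w\<^sub>n - w\<^sub>n\<^sub>-\<^sub>r\<close> with \<open>c = \<kappa> + 1\<close>. Whenever three points \<open>x\<close>, \<open>y\<close>, \<open>2cy - x\<close> lie
  on such a conic, the quadratic form \<open>x\<^sup>2 + y\<^sup>2 - 2cxy\<close> equals \<open>(1 - k)(1 - c\<^sup>2)\<close>; so the
  claimed expression, which is this form in \<open>u\<^sub>n\<^sub>-\<^sub>r, u\<^sub>n\<close> up to a shift and a factor 4, does not
  depend on \<open>n\<close>, and evaluating it at \<open>n = r\<close> (where \<open>\<xi>\<^sub>0 = 0\<close>) gives the right-hand side.\<close>

lemma conic_chord_quadratic_form:
  fixes x y p q c g K :: int
  assumes "c \<noteq> 0" and "g \<noteq> 0"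
    and x: "x\<^sup>2 - K * p\<^sup>2 = g" and y: "y\<^sup>2 - K * q\<^sup>2 = g"
    and z: "(2 * c * y - x)\<^sup>2 - K * (2 * c * q - p)\<^sup>2 = g"
  shows "x\<^sup>2 + y\<^sup>2 - 2 * c * x * y = g * (1 - c\<^sup>2)"
proof -
  have "(2 * c * y - x)\<^sup>2 - K * (2 * c * q - p)\<^sup>2
          = 4 * c\<^sup>2 * (y\<^sup>2 - K * q\<^sup>2) - 4 * c * (x * y - K * p * q) + (x\<^sup>2 - K * p\<^sup>2)"
    by (simp add: power2_eq_square algebra_simps)
  then have "4 * c\<^sup>2 * g - 4 * c * (x * y - K * p * q) + g = g"
    using x y z by simp
  then have "4 * c * (c * g - (x * y - K * p * q)) = 0"
    by (simp add: power2_eq_square algebra_simps)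
  then have bilinear: "x * y - K * p * q = c * g"
    using \<open>c \<noteq> 0\<close> by simp
  have "g * (x\<^sup>2 + y\<^sup>2 - 2 * c * x * y)
          = (y\<^sup>2 - K * q\<^sup>2) * x\<^sup>2 + (x\<^sup>2 - K * p\<^sup>2) * y\<^sup>2 - 2 * x * y * (c * g)"
    using x y by (simp add: algebra_simps)
  also have "\<dots> = - K * (x * q - y * p)\<^sup>2"
    unfolding bilinear[symmetric] by (simp add: power2_eq_square algebra_simps)
  also have "\<dots> = (x\<^sup>2 - K * p\<^sup>2) * (y\<^sup>2 - K * q\<^sup>2) - (x * y - K * p * q)\<^sup>2"
    by (simp add: power2_eq_square algebra_simps)
  also have "\<dots> = g * (g * (1 - c\<^sup>2))"
    unfolding x y bilinear by (simp add: power2_eq_square algebra_simps)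
  finally show ?thesis
    using \<open>g \<noteq> 0\<close> by simp
qed

lemma pell_recurrence_quadratic_form:
  fixes u v :: "nat \<Rightarrow> int" and c g K :: int
  assumes "c \<noteq> 0" and "g \<noteq> 0"
    and pell: "\<And>m. (u m)\<^sup>2 - K * (v m)\<^sup>2 = g"
    and rec_u: "\<And>m. m \<ge> 2 * r \<Longrightarrow> u m = 2 * c * u (m - r) - u (m - 2 * r)"
    and rec_v: "\<And>m. m \<ge> 2 * r \<Longrightarrow> v m = 2 * c * v (m - r) - v (m - 2 * r)"
    and "n \<ge> r"
  shows "(u (n - r))\<^sup>2 + (u n)\<^sup>2 - 2 * c * u (n - r) * u n = g * (1 - c\<^sup>2)"
proof (rule conic_chord_quadratic_form)
  have shift: "n + r - r = n" "n + r - 2 * r = n - r"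
    using \<open>n \<ge> r\<close> by auto
  show "(2 * c * u n - u (n - r))\<^sup>2 - K * (2 * c * v n - v (n - r))\<^sup>2 = g"
    using pell[of "n + r"] rec_u[of "n + r"] rec_v[of "n + r"] \<open>n \<ge> r\<close> by (simp add: shift)
qed (use assms in auto)

lemma two_times_tri: "2 * tri m = m * (m + 1)"
  unfolding tri_def by simp

lemma strict_mono_tri: "strict_mono tri"
proof (rule strict_monoI)
  fix m n :: nat
  assume "m < n"
  then have "m * (m + 1) < n * (n + 1)"
    by (intro mult_strict_mono) auto
  then show "tri m < tri n"
    using two_times_tri[of m] two_times_tri[of n] by linarith
qed

lemma tri_eq_iff [simp]: "tri m = tri n \<longleftrightarrow> m = n"
  using strict_mono_eq[OF strict_mono_tri] .

lemma tri_0 [simp]: "tri 0 = 0"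
  unfolding tri_def by simp

lemma enumerate_beyond_card:
  assumes "finite S" and "card S \<le> m"
  shows "enumerate S m = enumerate ({} :: nat set) 0"
  using assms
proof (induction m arbitrary: S)
  case (Suc m)
  show ?case
  proof (cases "S = {}")
    case True
    then show ?thesis
      using Suc.IH[of "{}"] by (simp add: enumerate_Suc)
  next
    case False
    then have "(LEAST n. n \<in> S) \<in> S"
      by (meson LeastI_ex ex_in_conv)
    then have "card (S - {LEAST n. n \<in> S}) \<le> m"
      using Suc.prems by (simp add: card_Diff_singleton)
    then show ?thesis
      using Suc.IH[of "S - {LEAST n. n \<in> S}"] Suc.prems by (simp add: enumerate_Suc)
  qed
qed simp

lemma tseq_0: "tseq k 0 = 0"
proof -
  have "0 \<in> {t. is_triangular (k * tri t)}"
    unfolding is_triangular_def by (auto intro: exI[of _ 0])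
  then show ?thesis
    unfolding tseq_def enumerate_0 by (metis Least_le le_zero_eq)
qed

lemma tri_xiseq:
  assumes "tseq k m \<in> {t. is_triangular (k * tri t)}"
  shows "tri (xiseq k m) = k * tri (tseq k m)"
proof -
  from assms obtain x where x: "k * tri (tseq k m) = tri x"
    unfolding is_triangular_def by auto
  then have "xiseq k m = x"
    unfolding xiseq_def by (rule_tac the_equality) auto
  with x show ?thesis
    by simp
qed

lemma xiseq_eq_0_if_tseq_eq_0:
  assumes "tseq k m = 0"
  shows "xiseq k m = 0"
proof -
  have "tseq k m \<in> {t. is_triangular (k * tri t)}"
    using assms unfolding is_triangular_def by (auto intro: exI[of _ 0])
  then have "tri (xiseq k m) = tri 0"
    using tri_xiseq assms by simp
  then show ?thesis
    by (simp only: tri_eq_iff)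
qed

text \<open>If the set were finite, \<open>tseq\<close> would eventually be constant, \<open>z\<close> say, and the
  recurrence would give \<open>\<kappa> (2z + 1) = 0\<close>.\<close>

lemma infinite_if_tseq_recurrence:
  fixes \<kappa> :: int
  assumes "\<kappa> \<noteq> 0"
    and rec_t: "\<And>m. m \<ge> 2 * r \<Longrightarrow>
        int (tseq k m) = 2 * (\<kappa> + 1) * int (tseq k (m - r)) - int (tseq k (m - 2 * r)) + \<kappa>"
  shows "infinite {t. is_triangular (k * tri t)}" (is "infinite ?S")
proof
  assume "finite ?S"
  define z where "z = enumerate ({} :: nat set) 0"
  have eventually_z: "tseq k m = z" if "m \<ge> card ?S" for m
    unfolding tseq_def z_def using enumerate_beyond_card[OF \<open>finite ?S\<close> that] .
  define m where "m = card ?S + 2 * r"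
  have "int z = 2 * (\<kappa> + 1) * int z - int z + \<kappa>"
    using rec_t[of m] eventually_z[of m] eventually_z[of "m - r"] eventually_z[of "m - 2 * r"]
    unfolding m_def by simp
  then have "\<kappa> * (2 * int z + 1) = 0"
    by (simp add: algebra_simps)
  with \<open>\<kappa> \<noteq> 0\<close> show False
    by simp
qed

lemma pell_tseq_xiseq:
  assumes "infinite {t. is_triangular (k * tri t)}"
  shows "(2 * int (xiseq k m) + 1)\<^sup>2 - int k * (2 * int (tseq k m) + 1)\<^sup>2 = 1 - int k"
proof -
  have "tri (xiseq k m) = k * tri (tseq k m)"
    using tri_xiseq enumerate_in_set[OF assms] unfolding tseq_def by blast
  then have "2 * tri (xiseq k m) = k * (2 * tri (tseq k m))"
    by simp
  then have "int (xiseq k m * (xiseq k m + 1)) = int (k * (tseq k m * (tseq k m + 1)))"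
    unfolding two_times_tri by (rule arg_cong)
  then show ?thesis
    by (simp add: power2_eq_square algebra_simps)
qed

theorem mainTheorem3:
  fixes k r n :: nat and \<kappa> :: int
  assumes k2: "k \<ge> 2"
    and nonsq: "\<not> (\<exists>m. m ^ 2 = k)"
    and r_pos: "r \<ge> 1"
    and kappa_def: "\<kappa> = int (tseq k (r - 1)) + int (tseq k r)"
    and kappa_xi: "\<kappa> = int (xiseq k r) - int (xiseq k (r - 1)) - 1"
    and ratio: "int (tseq k (2 * r)) - int (tseq k (r - 1)) = (2 * \<kappa> + 3) * int (tseq k r)"
    and rec_t: "\<And>m. m \<ge> 2 * r \<Longrightarrow>
        int (tseq k m) = 2 * (\<kappa> + 1) * int (tseq k (m - r)) - int (tseq k (m - 2 * r)) + \<kappa>"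
    and rec_xi: "\<And>m. m \<ge> 2 * r \<Longrightarrow>
        int (xiseq k m) = 2 * (\<kappa> + 1) * int (xiseq k (m - r)) - int (xiseq k (m - 2 * r)) + \<kappa>"
    and n_ge: "n \<ge> r"
  shows "(int (xiseq k n) - int (xiseq k (n - r))) ^ 2
           - \<kappa> * (int (xiseq k n) + 2 * int (xiseq k n) * int (xiseq k (n - r)) + int (xiseq k (n - r)))
         = int (xiseq k r) * (int (xiseq k (r - 1)) + 1)"
proof -
  define u where "u m = 2 * int (xiseq k m) + 1" for m
  define v where "v m = 2 * int (tseq k m) + 1" for m
  have "\<kappa> \<noteq> 0"
    using kappa_def kappa_xi xiseq_eq_0_if_tseq_eq_0[of k r] xiseq_eq_0_if_tseq_eq_0[of k "r - 1"]
    by auto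
  then have pell: "(u m)\<^sup>2 - int k * (v m)\<^sup>2 = 1 - int k" for m
    unfolding u_def v_def using pell_tseq_xiseq infinite_if_tseq_recurrence rec_t by blast
  have rec_u: "u m = 2 * (\<kappa> + 1) * u (m - r) - u (m - 2 * r)" if "m \<ge> 2 * r" for m
    using rec_xi[OF that] unfolding u_def by (simp add: algebra_simps)
  have rec_v: "v m = 2 * (\<kappa> + 1) * v (m - r) - v (m - 2 * r)" if "m \<ge> 2 * r" for m
    using rec_t[OF that] unfolding v_def by (simp add: algebra_simps)
  have form: "(u (m - r))\<^sup>2 + (u m)\<^sup>2 - 2 * (\<kappa> + 1) * u (m - r) * u m = (1 - int k) * (1 - (\<kappa> + 1)\<^sup>2)"
    if "m \<ge> r" for m
    using pell_recurrence_quadratic_form[OF _ _ pell rec_u rec_v that] k2 kappa_def by simp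
  define lhs where "lhs m = (int (xiseq k m) - int (xiseq k (m - r)))\<^sup>2
      - \<kappa> * (int (xiseq k m) + 2 * int (xiseq k m) * int (xiseq k (m - r)) + int (xiseq k (m - r)))"
    for m
  have scaled: "4 * lhs m = (u (m - r))\<^sup>2 + (u m)\<^sup>2 - 2 * (\<kappa> + 1) * u (m - r) * u m + 2 * \<kappa>" for m
    unfolding lhs_def u_def by (simp add: power2_eq_square algebra_simps)
  have "lhs n = lhs r"
    using scaled[of n] scaled[of r] form[OF n_ge] form[of r] by simp
  also have "\<dots> = int (xiseq k r) * (int (xiseq k r) - \<kappa>)"
    unfolding lhs_def using xiseq_eq_0_if_tseq_eq_0[OF tseq_0]
    by (simp add: power2_eq_square algebra_simps)
  also have "\<dots> = int (xiseq k r) * (int (xiseq k (r - 1)) + 1)"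
    using kappa_xi by simp
  finally show ?thesis
    unfolding lhs_def .
qed

end
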